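(* Let $d\geq 1$. There exist $e_1,e_2,e_3,e_4\in\mathbb{F}_{2^d}$ such that $t^5+t^4+e_1t^3+e_2t^2+e_3t+e_4$ is irreducible over $\mathbb{F}_{2^d}$ and no three of its (distinct) roots in an algebraic closure sum to $0$. *)

theory Defs
  imports "HOL-Algebra.Algebraic_Closure_Type"
begin

end

theory Submission
  imports Defs "HOL-Library.Cardinality"
begin

(* Let q = 2^d.  On the algebraic closure of F_q the map x \<mapsto> x^q is injective and additive, and
   its fixed points are exactly F_q.  A polynomial \<Sum>k\<in>S. x^(q^k) has at most q^(Max S) roots,
   so among the q^5 elements of F_{q^5} at most q + q^2 + q^3 + q^4 lie in F_q, have trace 0, or
   satisfy a + a^q + a^(q^2) = 0 or a + a^q + a^(q^3) = 0.  Dividing an element avoiding all of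
   these by its trace, which lies in F_q, gives a of trace 1.  As 5 is prime, the conjugates
   a^(q^k), k < 5, are distinct, and as every 3-subset of Z/5 is a rotation of {0,1,2} or {0,1,3},
   no three of them sum to 0.  The product of the t - a^(q^k) is invariant under x \<mapsto> x^q, hence
   has coefficients in F_q; it is irreducible over F_q because the roots of any factor are closed
   under x \<mapsto> x^q, and its t^4 coefficient is the trace, i.e. 1 in characteristic 2. *)

section \<open>Finite fields\<close>

lemma finite_field_power_card_eq_self:
  fixes x :: "'a::{field,finite}"
  shows "x ^ CARD('a) = x"
proof (cases "x = 0")
  case False
  define R where "R = (ring_of_type_algebra :: 'a ring)"
  interpret field R
    unfolding R_def by (rule field_from_type_algebra)
  have R_simps: "carrier R = UNIV" "\<zero>\<^bsub>R\<^esub> = 0" "\<one>\<^bsub>R\<^esub> = 1"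
    by (simp_all add: R_def ring_of_type_algebra_def)
  have R_pow: "y [^]\<^bsub>R\<^esub> n = y ^ n" for y :: 'a and n :: nat
    by (induction n) (simp_all add: R_def ring_of_type_algebra_def)
  have "x [^]\<^bsub>Multiplicative_Group.mult_of R\<^esub> Coset.order (Multiplicative_Group.mult_of R)
          = \<one>\<^bsub>Multiplicative_Group.mult_of R\<^esub>"
    using False by (intro group.pow_order_eq_1 field_mult_group) (simp add: R_simps)
  moreover have "Coset.order (Multiplicative_Group.mult_of R) = CARD('a) - 1"
    unfolding Coset.order_def Multiplicative_Group.carrier_mult_of R_simps
    by (simp add: card_Diff_singleton)
  ultimately have "x ^ (CARD('a) - 1) = 1"
    by (simp add: Multiplicative_Group.nat_pow_mult_of R_simps R_pow)
  then show ?thesis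
    using finite_UNIV_card_ge_0[where ?'a = 'a] by (simp add: power_eq_if)
qed (simp add: finite_UNIV_card_ge_0)

lemma finite_field_power_card_power_eq_self:
  fixes x :: "'a::{field,finite}"
  shows "x ^ CARD('a) ^ k = x"
  by (induction k) (simp_all add: power_mult finite_field_power_card_eq_self)

lemma card_UNIV_field_ge_2: "CARD('a::{field,finite}) \<ge> 2"
proof -
  have "card {0, 1 :: 'a} \<le> CARD('a)"
    by (rule card_mono) simp_all
  then show ?thesis
    by simp
qed

lemma CHAR_eq_2_if_even_card:
  assumes "even (CARD('a::{field,finite}))"
  shows "CHAR('a) = 2"
proof -
  have "(-1 :: 'a) = (-1) ^ CARD('a)"
    by (rule finite_field_power_card_eq_self [symmetric])
  also have "\<dots> = 1"
    using assms by simp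
  finally have "of_nat 2 = (0 :: 'a)"
    by (simp add: eq_neg_iff_add_eq_0)
  then have "CHAR('a) dvd 2"
    by (simp only: of_nat_eq_0_iff_char_dvd)
  then show ?thesis
    using prime_nat_iff [of 2] by auto
qed

section \<open>Polynomials and ring homomorphisms\<close>

lemma map_poly_mult_hom:
  fixes \<phi> :: "'a::comm_semiring_1 \<Rightarrow> 'b::comm_semiring_1"
  assumes "\<phi> 0 = 0" and "\<And>x y. \<phi> (x + y) = \<phi> x + \<phi> y" and "\<And>x y. \<phi> (x * y) = \<phi> x * \<phi> y"
  shows "map_poly \<phi> (p * q) = map_poly \<phi> p * map_poly \<phi> q"
proof (induction p)
  case (pCons a p)
  have "map_poly \<phi> (pCons a p * q) = map_poly \<phi> (smult a q) + map_poly \<phi> (pCons 0 (p * q))"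
    by (intro poly_eqI) (simp add: coeff_map_poly assms(1,2))
  then show ?case
    using pCons.IH by (simp add: map_poly_smult map_poly_pCons assms(1,3))
qed simp

lemma poly_map_poly_hom:
  fixes \<phi> :: "'a::comm_semiring_1 \<Rightarrow> 'b::comm_semiring_1"
  assumes "\<phi> 0 = 0" and "\<And>x y. \<phi> (x + y) = \<phi> x + \<phi> y" and "\<And>x y. \<phi> (x * y) = \<phi> x * \<phi> y"
  shows "poly (map_poly \<phi> p) (\<phi> x) = \<phi> (poly p x)"
  by (induction p) (simp_all add: map_poly_pCons assms)

lemma map_poly_prod_linear_factors_hom:
  fixes \<phi> :: "'a::comm_ring_1 \<Rightarrow> 'b::comm_ring_1"
  assumes "\<phi> 0 = 0" and "\<phi> 1 = 1" and add: "\<And>x y. \<phi> (x + y) = \<phi> x + \<phi> y"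
    and mult: "\<And>x y. \<phi> (x * y) = \<phi> x * \<phi> y"
  shows "map_poly \<phi> (\<Prod>i\<in>A. [:- b i, 1:]) = (\<Prod>i\<in>A. [:- \<phi> (b i), 1:])"
proof (induction A rule: infinite_finite_induct)
  case (insert i A)
  have "\<phi> (b i) + \<phi> (- b i) = 0"
    using add [of "b i" "- b i"] assms(1) by simp
  then have "\<phi> (- b i) = - \<phi> (b i)"
    by (metis add.commute eq_neg_iff_add_eq_0)
  then have "map_poly \<phi> [:- b i, 1:] = [:- \<phi> (b i), 1:]"
    by (simp add: map_poly_pCons assms(1,2))
  moreover have "map_poly \<phi> (\<Prod>j\<in>insert i A. [:- b j, 1:])
      = map_poly \<phi> [:- b i, 1:] * map_poly \<phi> (\<Prod>j\<in>A. [:- b j, 1:])"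
    using insert.hyps by (simp add: map_poly_mult_hom [OF assms(1) add mult] del: mult_pCons_left)
  ultimately show ?case
    using insert by simp
qed (simp_all add: assms(2))

lemma degree_prod_linear_factors: "degree (\<Prod>k\<in>A. [:- b k, 1 :: 'a::idom:]) = card A"
  by (subst degree_prod_sum_eq) auto

lemma coeff_prod_linear_factors_card: "coeff (\<Prod>k\<in>A. [:- b k, 1 :: 'a::idom:]) (card A) = 1"
  using lead_coeff_prod [of "\<lambda>k. [:- b k, 1:]" A] by (simp add: degree_prod_linear_factors)

lemma coeff_prod_linear_factors_subleading:
  "coeff (\<Prod>k<Suc n. [:- b k, 1 :: 'a::idom:]) n = - (\<Sum>k<Suc n. b k)"
proof (induction n)
  case (Suc n)
  define p where "p = (\<Prod>k<Suc n. [:- b k, 1 :: 'a:])"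
  have "coeff p (Suc n) = 1"
    using coeff_prod_linear_factors_card [of b "{..<Suc n}"] by (simp add: p_def)
  moreover have "(\<Prod>k<Suc (Suc n). [:- b k, 1:]) = smult (- b (Suc n)) p + pCons 0 p"
    by (simp add: p_def mult.commute [of _ "[:- b (Suc n), 1:]"])
  ultimately show ?case
    using Suc.IH by (simp add: p_def)
qed simp

lemma prod_lessThan_rotate:
  fixes f :: "nat \<Rightarrow> 'a::idom"
  assumes "f n = f 0" and "f 0 \<noteq> 0"
  shows "(\<Prod>k<n. f (Suc k)) = (\<Prod>k<n. f k)"
proof -
  have "f 0 * (\<Prod>k<n. f (Suc k)) = (\<Prod>k<Suc n. f k)"
    by (rule prod.lessThan_Suc_shift [symmetric])
  also have "\<dots> = f 0 * (\<Prod>k<n. f k)"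
    using assms(1) by (simp add: mult.commute)
  finally show ?thesis
    using assms(2) by simp
qed

lemma poly_eq_monic_quintic_form:
  assumes "degree p = 5" and "coeff p 5 = 1" and "coeff p 4 = 1"
  shows "p = [:coeff p 0, coeff p 1, coeff p 2, coeff p 3, 1, 1:]"
proof (rule poly_eqI)
  fix n
  show "coeff p n = coeff [:coeff p 0, coeff p 1, coeff p 2, coeff p 3, 1, 1:] n"
  proof (cases "n \<le> 5")
    case True
    then have "n \<in> {0, 1, 2, 3, 4, 5}"
      by auto
    with assms(2,3) show ?thesis
      by (auto simp: numeral_eq_Suc)
  qed (simp add: assms(1) coeff_eq_0 coeff_pCons split: nat.split)
qed

section \<open>Counting roots in an algebraically closed field\<close>

lemma size_proots_alg_closed:
  fixes p :: "'a::alg_closed_field poly"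
  shows "size (proots p) = degree p"
proof (cases "p = 0")
  case False
  then obtain A where A: "size A = degree p" "p = smult (lead_coeff p) (\<Prod>x\<in>#A. [:-x, 1:])"
    using alg_closed_imp_factorization by blast
  have "proots p = proots (\<Prod>x\<in>#A. [:-x, 1:])"
    using False by (subst A(2)) simp
  also have "\<dots> = A"
  proof (induction A)
    case (add a A)
    have "(\<Prod>x\<in>#A. [:-x, 1:]) \<noteq> 0"
      by (auto simp: prod_mset_zero_iff)
    then show ?case
      using add.IH by (simp add: proots_mult del: mult_pCons_left)
  qed simp
  finally show ?thesis
    using A(1) by simp
qed simp

lemma order_le_1_if_pderiv_nonzero:
  fixes p :: "'a::idom poly"
  assumes "poly (pderiv p) x \<noteq> 0"
  shows "order x p \<le> 1"
proof (rule ccontr)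
  assume "\<not> order x p \<le> 1"
  then have "[:-x, 1:] ^ Suc 1 dvd p"
    by (meson not_less_eq_eq order_1 dvd_trans le_imp_power_dvd)
  then obtain r where "p = [:-x, 1:] ^ Suc 1 * r"
    by (elim dvdE)
  then have "pderiv p = [:-x, 1:] ^ Suc 1 * pderiv r + smult (of_nat (Suc 1)) (r * [:-x, 1:] ^ 1)"
    by (simp only: lemma_order_pderiv1)
  then have "poly (pderiv p) x = 0"
    by simp
  with assms show False
    by contradiction
qed

lemma card_roots_eq_degree_if_separable:
  fixes p :: "'a::alg_closed_field poly"
  assumes "p \<noteq> 0" and "\<And>x. poly p x = 0 \<Longrightarrow> poly (pderiv p) x \<noteq> 0"
  shows "card {x. poly p x = 0} = degree p"
proof -
  have "degree p = (\<Sum>x\<in>set_mset (proots p). count (proots p) x)"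
    by (simp flip: size_proots_alg_closed add: size_multiset_overloaded_eq)
  also have "\<dots> = (\<Sum>x\<in>{x. poly p x = 0}. 1)"
  proof (rule sum.cong)
    show "set_mset (proots p) = {x. poly p x = 0}"
      using assms(1) by simp
    fix x
    assume "x \<in> {x. poly p x = 0}"
    then have "order x p \<noteq> 0" and "order x p \<le> 1"
      using assms order_le_1_if_pderiv_nonzero by (auto simp: order_root)
    then show "count (proots p) x = 1"
      using assms(1) by simp
  qed
  finally show ?thesis
    by simp
qed

lemma card_fixed_points_power:
  fixes n :: nat
  assumes "n > 0" and "of_nat n = (0 :: 'a::alg_closed_field)"
  shows "card {x :: 'a. x ^ n = x} = n"
proof -
  define p :: "'a poly" where "p = monom 1 n + [:0, -1:]"
  have "n \<noteq> 1"
    using assms by auto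
  then have deg: "degree p = n"
    using assms(1) unfolding p_def by (subst degree_add_eq_left) (auto simp: degree_monom_eq)
  have "pderiv p = [:-1:]"
    using assms by (simp add: p_def pderiv_add pderiv_monom pderiv_pCons)
  then have "card {x. poly p x = 0} = degree p"
    using deg assms(1) by (intro card_roots_eq_degree_if_separable) auto
  moreover have "{x. poly p x = 0} = {x. x ^ n = x}"
    by (simp add: p_def poly_monom)
  ultimately show ?thesis
    using deg by simp
qed

lemma roots_sum_power_powers_bound:
  fixes K :: "nat set" and q :: nat
  assumes "finite K" and "K \<noteq> {}" and "q \<ge> 2"
  shows "finite {x :: 'a::idom. (\<Sum>k\<in>K. x ^ q ^ k) = 0}"
    and "card {x :: 'a::idom. (\<Sum>k\<in>K. x ^ q ^ k) = 0} \<le> q ^ Max K"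
proof -
  define p :: "'a poly" where "p = (\<Sum>k\<in>K. monom 1 (q ^ k))"
  have roots: "{x. (\<Sum>k\<in>K. x ^ q ^ k) = 0} = {x. poly p x = 0}"
    by (simp add: p_def poly_sum poly_monom)
  have "coeff p (q ^ Max K) = (\<Sum>k\<in>K. if k = Max K then 1 else 0)"
    using assms(3) by (simp add: p_def coeff_sum coeff_monom)
  also have "\<dots> = 1"
    using assms(1,2) by simp
  finally have "p \<noteq> 0"
    by auto
  moreover have "degree p \<le> q ^ Max K"
    unfolding p_def using assms
    by (intro degree_sum_le) (auto intro!: order.trans [OF degree_monom_le] power_increasing)
  ultimately show "finite {x :: 'a. (\<Sum>k\<in>K. x ^ q ^ k) = 0}"
    and "card {x :: 'a. (\<Sum>k\<in>K. x ^ q ^ k) = 0} \<le> q ^ Max K"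
    unfolding roots using poly_roots_finite card_poly_roots_bound le_trans by blast+
qed

lemma sum_powers_less_power:
  fixes q :: nat
  assumes "q \<ge> 2"
  shows "(\<Sum>k<n. q ^ k) < q ^ n"
proof (induction n)
  case (Suc n)
  have "(\<Sum>k<Suc n. q ^ k) < q ^ n + q ^ n"
    using Suc.IH by simp
  also have "\<dots> \<le> q ^ Suc n"
    using mult_right_mono [OF assms, of "q ^ n"] by (simp only: mult_2 power_Suc)
  finally show ?case .
qed simp

lemma exists_fixed_point_avoiding_q_sums:
  fixes q :: nat
  assumes "q \<ge> 2" and "of_nat q = (0 :: 'a)"
  obtains x :: "'a::alg_closed_field" where "x ^ q ^ 5 = x" and "x ^ q \<noteq> x"
    and "(\<Sum>k<5. x ^ q ^ k) \<noteq> 0" and "(\<Sum>k\<in>{0, 1, 2}. x ^ q ^ k) \<noteq> 0"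
    and "(\<Sum>k\<in>{0, 1, 3}. x ^ q ^ k) \<noteq> 0"
proof -
  define B where "B K = {x :: 'a. (\<Sum>k\<in>K. x ^ q ^ k) = 0}" for K
  define bad where "bad = {x :: 'a. x ^ q = x} \<union> B {..<5} \<union> B {0, 1, 2} \<union> B {0, 1, 3}"
  have bound: "finite (B K)" "card (B K) \<le> q ^ Max K" if "finite K" "0 \<in> K" for K
    using roots_sum_power_powers_bound [OF that(1) _ assms(1)] that(2) by (auto simp: B_def)
  have fixed: "card {x :: 'a. x ^ q ^ n = x} = q ^ n" if "n > 0" for n
    using assms that by (intro card_fixed_points_power) simp_all
  have "finite {x :: 'a. x ^ q = x}"
    using fixed [of 1] assms(1) by (intro card_ge_0_finite) simp
  then have "finite bad"
    using bound(1) [of "{..<5}"] bound(1) [of "{0, 1, 2}"] bound(1) [of "{0, 1, 3}"] by (simp add: bad_def)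
  have "card bad \<le> card {x :: 'a. x ^ q = x} + card (B {..<5}) + card (B {0, 1, 2}) + card (B {0, 1, 3})"
    unfolding bad_def by (meson card_Un_le add_mono le_trans order_refl)
  also have "\<dots> \<le> q + q ^ 4 + q ^ 2 + q ^ 3"
    using fixed [of 1] bound [of "{..<5}"] bound [of "{0, 1, 2}"] bound [of "{0, 1, 3}"]
      Max_eqI [of "{..<5 :: nat}" 4]
    by (intro add_mono) (simp_all add: power2_eq_square)
  also have "\<dots> < q ^ 5"
    using sum_powers_less_power [OF assms(1), of 5] by (simp add: eval_nat_numeral)
  also have "\<dots> = card {x :: 'a. x ^ q ^ 5 = x}"
    using fixed [of 5] by simp
  finally have "\<not> {x :: 'a. x ^ q ^ 5 = x} \<subseteq> bad"
    using \<open>finite bad\<close> card_mono leD by blast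
  then obtain x where "x ^ q ^ 5 = x" "x \<notin> bad"
    by blast
  then show ?thesis
    by (intro that) (auto simp: bad_def B_def)
qed

lemma exists_trace_one_element:
  fixes q :: nat
  assumes "prime CHAR('a)" and "q = CHAR('a) ^ m" and "m > 0"
  obtains \<alpha> :: "'a::alg_closed_field"
  where "\<alpha> ^ q ^ 5 = \<alpha>" and "\<alpha> ^ q \<noteq> \<alpha>" and "(\<Sum>k<5. \<alpha> ^ q ^ k) = 1"
    and "\<alpha> + \<alpha> ^ q + \<alpha> ^ q ^ 2 \<noteq> 0" and "\<alpha> + \<alpha> ^ q + \<alpha> ^ q ^ 3 \<noteq> 0"
proof -
  have "q \<ge> CHAR('a)"
    using assms(3) prime_gt_0_nat [OF assms(1)] by (simp add: assms(2) self_le_power)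
  then have "q \<ge> 2"
    using prime_ge_2_nat [OF assms(1)] by linarith
  moreover have "of_nat q = (0 :: 'a)"
    using assms(2,3) by (simp add: of_nat_eq_0_iff_char_dvd)
  ultimately obtain x :: 'a where x: "x ^ q ^ 5 = x" "x ^ q \<noteq> x"
    "(\<Sum>k<5. x ^ q ^ k) \<noteq> 0"
    "(\<Sum>k\<in>{0, 1, 2}. x ^ q ^ k) \<noteq> 0" "(\<Sum>k\<in>{0, 1, 3}. x ^ q ^ k) \<noteq> 0"
    by (rule exists_fixed_point_avoiding_q_sums)
  define c where "c = (\<Sum>k<5. x ^ q ^ k)"
  have "c ^ q = (\<Sum>k<5. x ^ q ^ Suc k)"
    unfolding c_def using assms(1,2)
    by (subst freshmans_dream_sum' [where n = m]) (simp_all add: mult.commute flip: power_mult)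
  also have "\<dots> = c"
    using x(1) by (simp add: c_def eval_nat_numeral)
  finally have "c ^ q ^ k = c" for k
    by (induction k) (simp_all add: power_mult)
  then have conj: "(x / c) ^ q ^ k = x ^ q ^ k / c" for k
    by (simp add: power_divide)
  have "c \<noteq> 0"
    using x(3) by (simp add: c_def)
  show ?thesis
  proof (rule that [of "x / c"])
    show "(x / c) ^ q ^ 5 = x / c" and "(x / c) ^ q \<noteq> x / c"
      using conj [of 5] conj [of 1] x(1,2) \<open>c \<noteq> 0\<close> by simp_all
    have "(\<Sum>k<5. (x / c) ^ q ^ k) = (\<Sum>k<5. x ^ q ^ k) / c"
      by (simp only: conj sum_divide_distrib)
    then show "(\<Sum>k<5. (x / c) ^ q ^ k) = 1"
      using \<open>c \<noteq> 0\<close> by (simp flip: c_def)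
    show "x / c + (x / c) ^ q + (x / c) ^ q ^ 2 \<noteq> 0" and "x / c + (x / c) ^ q + (x / c) ^ q ^ 3 \<noteq> 0"
      using conj [of 1] conj [of 2] conj [of 3] x(4,5) \<open>c \<noteq> 0\<close>
      by (simp_all add: add_divide_distrib [symmetric] ac_simps)
  qed
qed

section \<open>Orbits of an additive map\<close>

lemma funpow_power_eq: "((\<lambda>y. y ^ m) ^^ k) x = (x :: 'a::monoid_mult) ^ m ^ k"
  by (induction k) (simp_all add: power_mult [symmetric] mult.commute)

lemma funpow_gcd_fixed:
  assumes "(f ^^ m) x = x" and "(f ^^ n) x = x"
  shows "(f ^^ gcd m n) x = x"
  using assms
proof (induction m n rule: gcd_nat_induct)
  case (step m n)
  then have "(f ^^ (m mod n)) x = x"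
    by (simp add: funpow_mod_eq)
  with step show ?case
    by (simp add: gcd_red_nat [of m n])
qed simp

lemma inj_on_funpow_orbit_prime:
  assumes "prime p" and "inj f" and "(f ^^ p) x = x" and "f x \<noteq> x"
  shows "inj_on (\<lambda>k. (f ^^ k) x) {..<p}"
proof (rule linorder_inj_onI')
  fix i j
  assume "i \<in> {..<p}" "j \<in> {..<p}" "i < j"
  then have "\<not> p dvd j - i"
    by (intro nat_dvd_not_less) auto
  then have "coprime (j - i) p"
    using assms(1) by (simp add: prime_imp_coprime coprime_commute)
  show "(f ^^ i) x \<noteq> (f ^^ j) x"
  proof
    assume "(f ^^ i) x = (f ^^ j) x"
    also have "\<dots> = (f ^^ (i + (j - i))) x"
      using \<open>i < j\<close> by simp
    also have "\<dots> = (f ^^ i) ((f ^^ (j - i)) x)"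
      by (simp only: funpow_add o_apply)
    finally have "x = (f ^^ (j - i)) x"
      by (rule injD [OF inj_fn [OF assms(2)]])
    then have "(f ^^ gcd (j - i) p) x = x"
      using assms(3) by (intro funpow_gcd_fixed) simp_all
    with \<open>coprime (j - i) p\<close> assms(4) show False
      by simp
  qed
qed

lemma funpow_additive:
  fixes f :: "'a::ab_group_add \<Rightarrow> 'a"
  assumes "\<And>u v. f (u + v) = f u + f v"
  shows "(f ^^ n) (u + v) = (f ^^ n) u + (f ^^ n) v" and "(f ^^ n) 0 = 0"
proof -
  show "(f ^^ n) (u + v) = (f ^^ n) u + (f ^^ n) v" for u v
    by (induction n) (simp_all add: assms)
  from this [of 0 0] show "(f ^^ n) 0 = 0"
    by simp
qed

lemma orbit5_rotated_sum_nonzero: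
  fixes f :: "'a::ab_group_add \<Rightarrow> 'a"
  assumes add: "\<And>u v. f (u + v) = f u + f v" and "inj f" and "(f ^^ 5) x = x"
    and "x + f x + (f ^^ d) x \<noteq> 0"
    and "t mod 5 = (s + 1) mod 5" and "u mod 5 = (s + d) mod 5"
  shows "(f ^^ s) x + (f ^^ t) x + (f ^^ u) x \<noteq> 0"
proof
  assume "(f ^^ s) x + (f ^^ t) x + (f ^^ u) x = 0"
  moreover have "(f ^^ t) x = (f ^^ (s + 1)) x" and "(f ^^ u) x = (f ^^ (s + d)) x"
    using assms(3,5,6) funpow_mod_eq by metis+
  moreover have "(f ^^ s) (x + f x + (f ^^ d) x) = (f ^^ s) x + (f ^^ (s + 1)) x + (f ^^ (s + d)) x"
    by (simp only: funpow_additive(1) [OF add] funpow_add o_apply) simp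
  ultimately have "(f ^^ s) (x + f x + (f ^^ d) x) = (f ^^ s) 0"
    by (simp add: funpow_additive(2) [OF add])
  then have "x + f x + (f ^^ d) x = 0"
    by (rule injD [OF inj_fn [OF assms(2)]])
  with assms(4) show False
    by contradiction
qed

lemma orbit5_sum_three_nonzero:
  fixes f :: "'a::ab_group_add \<Rightarrow> 'a" and x :: 'a
  defines "R \<equiv> (\<lambda>k. (f ^^ k) x) ` {..<5}"
  assumes add: "\<And>u v. f (u + v) = f u + f v" and inj: "inj f" and period: "(f ^^ 5) x = x"
    and sum2: "x + f x + (f ^^ 2) x \<noteq> 0" and sum3: "x + f x + (f ^^ 3) x \<noteq> 0"
    and yzw: "y \<in> R" "z \<in> R" "w \<in> R" "y \<noteq> z" "z \<noteq> w" "y \<noteq> w"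
  shows "y + z + w \<noteq> 0"
proof -
  define a where "a n = (f ^^ n) x" for n
  note rotated = orbit5_rotated_sum_nonzero [OF add inj period]
  have T: "a 0 + a 1 + a 2 \<noteq> 0" "a 1 + a 2 + a 3 \<noteq> 0" "a 2 + a 3 + a 4 \<noteq> 0"
    "a 3 + a 4 + a 0 \<noteq> 0" "a 4 + a 0 + a 1 \<noteq> 0" "a 0 + a 1 + a 3 \<noteq> 0"
    "a 1 + a 2 + a 4 \<noteq> 0" "a 2 + a 3 + a 0 \<noteq> 0" "a 3 + a 4 + a 1 \<noteq> 0" "a 4 + a 0 + a 2 \<noteq> 0"
    using rotated [OF sum2, folded a_def] rotated [OF sum3, folded a_def] by simp_all
  have "R = {a 0, a 1, a 2, a 3, a 4}"
    by (auto simp: R_def a_def lessThan_nat_numeral)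
  with T yzw show ?thesis
    by (auto simp: ac_simps)
qed

section \<open>The Frobenius map on the algebraic closure\<close>

(* The hypothesis CARD('a) = CHAR('a) ^ m holds in every finite field; it is assumed here because
   for the theorem it is immediate from CARD('a) = 2 ^ d. *)

lemma alg_closure_power_card_add:
  fixes x y :: "'a::{field,finite} alg_closure"
  assumes "prime CHAR('a)" and "CARD('a) = CHAR('a) ^ m"
  shows "(x + y) ^ CARD('a) ^ k = x ^ CARD('a) ^ k + y ^ CARD('a) ^ k"
  using assms by (intro freshmans_dream' [where n = "m * k"]) (simp_all add: power_mult)

lemma inj_alg_closure_power_card:
  assumes "prime CHAR('a::{field,finite})" and "CARD('a) = CHAR('a) ^ m"
  shows "inj (\<lambda>x :: 'a alg_closure. x ^ CARD('a))"
proof (rule injI)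
  fix x y :: "'a alg_closure"
  assume eq: "x ^ CARD('a) = y ^ CARD('a)"
  have "x ^ CARD('a) = (x - y) ^ CARD('a) + y ^ CARD('a)"
    using alg_closure_power_card_add [OF assms, of "x - y" y 1] by simp
  with eq have "(x - y) ^ CARD('a) = 0"
    by simp
  then show "x = y"
    by simp
qed

lemma alg_closure_power_card_fixed_iff:
  assumes "prime CHAR('a::{field,finite})" and "CARD('a) = CHAR('a) ^ m"
  shows "x ^ CARD('a) = x \<longleftrightarrow> x \<in> range (to_ac :: 'a \<Rightarrow> 'a alg_closure)"
proof -
  define q where "q = CARD('a)"
  have "m > 0"
    using card_UNIV_field_ge_2 [where 'a = 'a] assms(2) by (cases m) simp_all
  then have "of_nat q = (0 :: 'a alg_closure)"
    using assms(2) by (simp add: q_def of_nat_eq_0_iff_char_dvd)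
  then have card: "card {x :: 'a alg_closure. x ^ q = x} = q"
    using card_UNIV_field_ge_2 [where 'a = 'a] by (intro card_fixed_points_power) (simp_all add: q_def)
  have "range (to_ac :: 'a \<Rightarrow> 'a alg_closure) \<subseteq> {x. x ^ q = x}"
    by (auto simp: q_def finite_field_power_card_eq_self simp flip: to_ac_power)
  moreover have "card (range (to_ac :: 'a \<Rightarrow> 'a alg_closure)) = q"
    by (simp add: q_def card_image inj_to_ac)
  moreover have "finite {x :: 'a alg_closure. x ^ q = x}"
    using card card_UNIV_field_ge_2 [where 'a = 'a] by (intro card_ge_0_finite) (simp add: q_def)
  ultimately have "range to_ac = {x :: 'a alg_closure. x ^ q = x}"
    using card by (intro card_subset_eq) simp_all
  then show ?thesis
    by (simp add: q_def)
qed

lemma poly_map_poly_to_ac_power_card_power: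
  fixes g :: "'a::{field,finite} poly" and x :: "'a alg_closure"
  assumes "prime CHAR('a)" and "CARD('a) = CHAR('a) ^ m"
  shows "poly (map_poly to_ac g) (x ^ CARD('a) ^ k) = poly (map_poly to_ac g) x ^ CARD('a) ^ k"
proof -
  define \<phi> where "\<phi> y = y ^ CARD('a) ^ k" for y :: "'a alg_closure"
  have hom: "\<phi> 0 = 0" "\<phi> (y + z) = \<phi> y + \<phi> z" "\<phi> (y * z) = \<phi> y * \<phi> z" for y z
    using card_UNIV_field_ge_2 [where 'a = 'a] alg_closure_power_card_add [OF assms]
    by (simp_all add: \<phi>_def power_mult_distrib)
  have "map_poly \<phi> (map_poly to_ac g) = map_poly to_ac g"
    by (simp add: map_poly_map_poly hom(1) o_def \<phi>_def finite_field_power_card_power_eq_self flip: to_ac_power)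
  then show ?thesis
    using poly_map_poly_hom [of \<phi> "map_poly to_ac g" x, OF hom] by (simp add: \<phi>_def)
qed

lemma poly_map_poly_to_ac_orbit_root:
  fixes g :: "'a::{field,finite} poly" and \<alpha> :: "'a alg_closure"
  assumes "prime CHAR('a)" and "CARD('a) = CHAR('a) ^ m"
    and "\<alpha> ^ CARD('a) ^ n = \<alpha>" and "i \<le> n" and "poly (map_poly to_ac g) (\<alpha> ^ CARD('a) ^ i) = 0"
  shows "poly (map_poly to_ac g) (\<alpha> ^ CARD('a) ^ k) = 0"
proof -
  have "\<alpha> ^ CARD('a) ^ k = \<alpha> ^ CARD('a) ^ (n + k)"
    using assms(3) by (simp add: power_add power_mult)
  also have "\<dots> = (\<alpha> ^ CARD('a) ^ i) ^ CARD('a) ^ (n + k - i)"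
    using assms(4) by (simp flip: power_mult power_add)
  finally show ?thesis
    using assms(5) poly_map_poly_to_ac_power_card_power [OF assms(1,2)] by simp
qed

lemma orbit_polynomial_descends:
  fixes \<alpha> :: "'a::{field,finite} alg_closure"
  assumes "prime CHAR('a)" and "CARD('a) = CHAR('a) ^ m"
    and "\<alpha> ^ CARD('a) ^ n = \<alpha>"
  obtains f :: "'a poly" where "map_poly to_ac f = (\<Prod>k<n. [:- (\<alpha> ^ CARD('a) ^ k), 1:])"
proof -
  define q where "q = CARD('a)"
  define P where "P = (\<Prod>k<n. [:- (\<alpha> ^ q ^ k), 1:])"
  define F where "F y = y ^ q" for y :: "'a alg_closure"
  have hom: "F 0 = 0" "F 1 = 1" "F (y + z) = F y + F z" "F (y * z) = F y * F z" for y z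
    using card_UNIV_field_ge_2 [where 'a = 'a] alg_closure_power_card_add [OF assms(1,2), of _ _ 1]
    by (simp_all add: F_def q_def power_mult_distrib)
  have "map_poly F P = (\<Prod>k<n. [:- (\<alpha> ^ q ^ Suc k), 1:])"
    unfolding P_def
    by (subst map_poly_prod_linear_factors_hom [OF hom]) (simp add: F_def mult.commute flip: power_mult)
  also have "\<dots> = P"
    unfolding P_def using assms(3) by (intro prod_lessThan_rotate) (simp_all add: q_def)
  finally have "coeff P i ^ q = coeff P i" for i
    by (metis F_def coeff_map_poly hom(1))
  then have "coeff P i \<in> range to_ac" for i
    using alg_closure_power_card_fixed_iff [OF assms(1,2)] by (simp add: q_def)
  then have "map_poly to_ac (map_poly of_ac P) = P"
    by (intro poly_eqI) (simp add: coeff_map_poly to_ac_of_ac)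
  then show ?thesis
    using that by (simp add: P_def q_def)
qed

lemma orbit_polynomial_irreducible:
  fixes f :: "'a::{field,finite} poly" and \<alpha> :: "'a alg_closure"
  assumes "prime CHAR('a)" and "CARD('a) = CHAR('a) ^ m"
    and "n > 0" and "\<alpha> ^ CARD('a) ^ n = \<alpha>" and "inj_on (\<lambda>k. \<alpha> ^ CARD('a) ^ k) {..<n}"
    and f: "map_poly to_ac f = (\<Prod>k<n. [:- (\<alpha> ^ CARD('a) ^ k), 1:])"
  shows "irreducible f"
proof -
  have deg_f: "degree f = n"
    using f degree_map_poly [of to_ac f] by (simp add: degree_prod_linear_factors)
  show ?thesis
  proof (rule irreducibleI)
    show "f \<noteq> 0"
      using deg_f assms(3) by auto
    then show "\<not> is_unit f"
      using deg_f assms(3) by (simp add: is_unit_iff_degree)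
    fix g h
    assume fgh: "f = g * h"
    show "is_unit g \<or> is_unit h"
    proof (rule ccontr)
      assume "\<not> (is_unit g \<or> is_unit h)"
      with fgh \<open>f \<noteq> 0\<close> have "degree g > 0" "degree h > 0"
        by (auto simp: is_unit_iff_degree)
      define G where "G = map_poly to_ac g"
      have "degree G = degree g"
        by (simp add: G_def degree_map_poly)
      then have deg_G: "degree G < n" and G0: "G \<noteq> 0" and "degree G \<noteq> 0"
        using deg_f fgh \<open>degree g > 0\<close> \<open>degree h > 0\<close> \<open>f \<noteq> 0\<close>
        by (auto simp: degree_mult_eq)
      then obtain r where "poly G r = 0"
        using alg_closed_imp_poly_has_root by blast
      moreover have "map_poly to_ac f = G * map_poly to_ac h"
        unfolding fgh G_def by (rule map_poly_mult_hom) simp_all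
      ultimately have "poly (\<Prod>k<n. [:- (\<alpha> ^ CARD('a) ^ k), 1:]) r = 0"
        using f by simp
      then obtain i where "i < n" and "poly G (\<alpha> ^ CARD('a) ^ i) = 0"
        using \<open>poly G r = 0\<close> by (auto simp: poly_prod prod_zero_iff)
      then have "poly G (\<alpha> ^ CARD('a) ^ k) = 0" for k
        using poly_map_poly_to_ac_orbit_root [OF assms(1,2,4), of i g k] by (simp add: G_def)
      then have "(\<lambda>k. \<alpha> ^ CARD('a) ^ k) ` {..<n} \<subseteq> {x. poly G x = 0}"
        by auto
      then have "card ((\<lambda>k. \<alpha> ^ CARD('a) ^ k) ` {..<n}) \<le> degree G"
        using card_mono [OF poly_roots_finite [OF G0]] card_poly_roots_bound [OF G0] le_trans by blast
      with deg_G assms(5) show False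
        by (simp add: card_image)
    qed
  qed
qed

lemma char_2_trace_one_quintic_form:
  fixes f :: "'a::field poly" and b :: "nat \<Rightarrow> 'a alg_closure"
  assumes "CHAR('a) = 2" and "map_poly to_ac f = (\<Prod>k<5. [:- b k, 1:])" and "(\<Sum>k<5. b k) = 1"
  obtains e1 e2 e3 e4 where "f = [:e4, e3, e2, e1, 1, 1:]"
proof -
  have "coeff (map_poly to_ac f) 4 = - 1"
    using coeff_prod_linear_factors_subleading [of b 4] assms(2,3) by simp
  then have "coeff f 4 = 1"
    using uminus_CHAR_2 [where 'a = "'a alg_closure"] assms(1) by (simp add: coeff_map_poly)
  moreover have "degree f = 5" and "coeff f 5 = 1"
    using arg_cong [OF assms(2), of degree] arg_cong [OF assms(2), of "\<lambda>p. coeff p 5"]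
      coeff_prod_linear_factors_card [of b "{..<5}"]
    by (simp_all add: degree_map_poly degree_prod_linear_factors coeff_map_poly)
  ultimately show ?thesis
    using poly_eq_monic_quintic_form that by metis
qed

theorem proposition7p11:
  fixes d :: nat
  assumes "d \<ge> 1"
    and "card (UNIV :: 'a set) = 2 ^ d"
  shows "\<exists>e1 e2 e3 e4 :: 'a::{field,finite}.
           irreducible [:e4, e3, e2, e1, 1, 1:] \<and>
           (\<forall>x y z :: 'a alg_closure.
              poly (map_poly to_ac [:e4, e3, e2, e1, 1, 1:]) x = 0 \<and>
              poly (map_poly to_ac [:e4, e3, e2, e1, 1, 1:]) y = 0 \<and>
              poly (map_poly to_ac [:e4, e3, e2, e1, 1, 1:]) z = 0 \<and>
              x \<noteq> y \<and> y \<noteq> z \<and> x \<noteq> z \<longrightarrow> x + y + z \<noteq> 0)"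
proof -
  have char: "CHAR('a) = 2"
    using assms by (intro CHAR_eq_2_if_even_card) simp
  then have ff: "prime CHAR('a)" "CARD('a) = CHAR('a) ^ d"
    using assms(2) by simp_all
  obtain \<alpha> :: "'a alg_closure" where \<alpha>: "\<alpha> ^ CARD('a) ^ 5 = \<alpha>" "\<alpha> ^ CARD('a) \<noteq> \<alpha>"
    "(\<Sum>k<5. \<alpha> ^ CARD('a) ^ k) = 1"
    "\<alpha> + \<alpha> ^ CARD('a) + \<alpha> ^ CARD('a) ^ 2 \<noteq> 0"
    "\<alpha> + \<alpha> ^ CARD('a) + \<alpha> ^ CARD('a) ^ 3 \<noteq> 0"
    using exists_trace_one_element [where 'a = "'a alg_closure" and q = "CARD('a)" and m = d] ff assms(1)
    by auto
  define F where "F = (\<lambda>x :: 'a alg_closure. x ^ CARD('a))"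
  have F: "inj F" "\<And>x y. F (x + y) = F x + F y" "F x = x ^ CARD('a)" "(F ^^ k) x = x ^ CARD('a) ^ k"
    for k x
    using inj_alg_closure_power_card [OF ff] alg_closure_power_card_add [OF ff, of _ _ 1]
    by (simp_all add: F_def funpow_power_eq)
  obtain f where f: "map_poly to_ac f = (\<Prod>k<5. [:- (\<alpha> ^ CARD('a) ^ k), 1:])"
    using orbit_polynomial_descends [OF ff \<alpha>(1)] by auto
  moreover have "irreducible f"
    using orbit_polynomial_irreducible [OF ff _ \<alpha>(1) _ f] inj_on_funpow_orbit_prime [of 5 F \<alpha>] F \<alpha>(1,2)
    by simp
  moreover obtain e1 e2 e3 e4 where "f = [:e4, e3, e2, e1, 1, 1:]"
    using char_2_trace_one_quintic_form [OF char f \<alpha>(3)] .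
  moreover have "y + z + w \<noteq> 0"
    if "y \<in> (\<lambda>k. (F ^^ k) \<alpha>) ` {..<5}" "z \<in> (\<lambda>k. (F ^^ k) \<alpha>) ` {..<5}"
      "w \<in> (\<lambda>k. (F ^^ k) \<alpha>) ` {..<5}" "y \<noteq> z" "z \<noteq> w" "y \<noteq> w" for y z w
    using orbit5_sum_three_nonzero [OF F(2,1) _ _ _ that] F \<alpha>(1,4,5) by simp
  ultimately show ?thesis
    by (intro exI) (auto simp: F poly_prod prod_zero_iff)
qed

end
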